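(* Let $f:X\to Y$ be a continuous map between arbitrary topological spaces. Then $f$ is locally closed if and only if $f^{-1}:\mathcal P Y\to\mathcal P X$ is a D-morphism of MT-algebras.
   Context: For a space $X$, $\mathcal P X$ is the MT-algebra consisting of the powerset of $X$ with $\square$ the topological interior operator. An MT-morphism between MT-algebras is a complete boolean homomorphism $h$ with $h(\square a)\le\square h(a)$ for all $a$; such $h:M\to N$ has a left adjoint $h^*:N\to M$, $h^*(b)=\bigwedge\{a\in M: b\le h(a)\}$. An element $a$ of an MT-algebra is locally closed if $a=\square b\wedge\Diamond c$ for some $b,c$, where $\Diamond=\neg\square\neg$. An MT-morphism $h$ is a D-morphism if $h^*$ maps locally closed atoms to locally closed atoms. A point $x\in X$ is locally closed if $\{x\}$ is closed in some open neighborhood of $x$; a continuous map is locally closed if it maps locally closed points to locally closed points. *)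

theory Defs
  imports "HOL-Analysis.Analysis"
begin

text \<open>The MT-algebra P X: subsets of topspace X, box = interior, diamond = closure.
  Elements of P X are represented as sets A with A \<subseteq> topspace X.\<close>

definition pow_atom :: "'a topology \<Rightarrow> 'a set \<Rightarrow> bool" where
  "pow_atom X a \<longleftrightarrow> a \<subseteq> topspace X \<and> a \<noteq> {} \<and> (\<forall>b. b \<subseteq> a \<longrightarrow> b = {} \<or> b = a)"

definition pow_locally_closed :: "'a topology \<Rightarrow> 'a set \<Rightarrow> bool" where
  "pow_locally_closed X a \<longleftrightarrow>
     (\<exists>b c. b \<subseteq> topspace X \<and> c \<subseteq> topspace X \<and> a = (X interior_of b) \<inter> (X closure_of c))"

definition pow_mt_morphism :: "'b topology \<Rightarrow> 'a topology \<Rightarrow> ('b set \<Rightarrow> 'a set) \<Rightarrow> bool" where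
  "pow_mt_morphism Y X h \<longleftrightarrow>
     (\<forall>B. B \<subseteq> topspace Y \<longrightarrow> h B \<subseteq> topspace X) \<and>
     (\<forall>\<A>. \<A> \<subseteq> Pow (topspace Y) \<longrightarrow> h (\<Union>\<A>) = \<Union>(h ` \<A>)) \<and>
     (\<forall>\<A>. \<A> \<subseteq> Pow (topspace Y) \<longrightarrow> h (topspace Y \<inter> \<Inter>\<A>) = topspace X \<inter> \<Inter>(h ` \<A>)) \<and>
     (\<forall>B. B \<subseteq> topspace Y \<longrightarrow> h (topspace Y - B) = topspace X - h B) \<and>
     (\<forall>B. B \<subseteq> topspace Y \<longrightarrow> h (Y interior_of B) \<subseteq> X interior_of (h B))"

definition pow_left_adjoint :: "'b topology \<Rightarrow> ('b set \<Rightarrow> 'a set) \<Rightarrow> 'a set \<Rightarrow> 'b set" where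
  "pow_left_adjoint Y h A = topspace Y \<inter> \<Inter>{B. B \<subseteq> topspace Y \<and> A \<subseteq> h B}"

definition pow_D_morphism :: "'b topology \<Rightarrow> 'a topology \<Rightarrow> ('b set \<Rightarrow> 'a set) \<Rightarrow> bool" where
  "pow_D_morphism Y X h \<longleftrightarrow> pow_mt_morphism Y X h \<and>
     (\<forall>a. pow_atom X a \<and> pow_locally_closed X a \<longrightarrow>
          pow_atom Y (pow_left_adjoint Y h a) \<and> pow_locally_closed Y (pow_left_adjoint Y h a))"

definition locally_closed_point :: "'a topology \<Rightarrow> 'a \<Rightarrow> bool" where
  "locally_closed_point X x \<longleftrightarrow> x \<in> topspace X \<and>
     (\<exists>U. openin X U \<and> x \<in> U \<and> closedin (subtopology X U) {x})"

definition locally_closed_map :: "'a topology \<Rightarrow> 'b topology \<Rightarrow> ('a \<Rightarrow> 'b) \<Rightarrow> bool" where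
  "locally_closed_map X Y f \<longleftrightarrow>
     (\<forall>x. locally_closed_point X x \<longrightarrow> locally_closed_point Y (f x))"

definition pow_preimage :: "'a topology \<Rightarrow> ('a \<Rightarrow> 'b) \<Rightarrow> 'b set \<Rightarrow> 'a set" where
  "pow_preimage X f B = {x \<in> topspace X. f x \<in> B}"

end

theory Submission
  imports Defs
begin

text \<open>In \<open>\<P> X\<close> the atoms are the singletons, and \<open>{x}\<close> is locally closed exactly when
  \<open>x\<close> is a locally closed point. The left adjoint of \<open>f\<^sup>-\<^sup>1\<close> is the direct image, so it sends
  the atom \<open>{x}\<close> to the atom \<open>{f x}\<close>; hence \<open>f\<^sup>-\<^sup>1\<close> is a D-morphism iff \<open>f\<close> maps locally
  closed points to locally closed points.\<close>

lemma pow_atom_iff_singleton: "pow_atom X a \<longleftrightarrow> (\<exists>x\<in>topspace X. a = {x})"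
proof
  assume a: "pow_atom X a"
  then obtain x where "x \<in> a"
    unfolding pow_atom_def by blast
  with a have "a = {x}"
    unfolding pow_atom_def by blast
  with a show "\<exists>x\<in>topspace X. a = {x}"
    unfolding pow_atom_def by blast
qed (auto simp: pow_atom_def)

lemma pow_locally_closed_singleton_iff:
  assumes "x \<in> topspace X"
  shows "pow_locally_closed X {x} \<longleftrightarrow> locally_closed_point X x"
proof
  assume "pow_locally_closed X {x}"
  then obtain b c where bc: "{x} = X interior_of b \<inter> X closure_of c"
    unfolding pow_locally_closed_def by blast
  have "closedin (subtopology X (X interior_of b)) {x}"
    unfolding closedin_subtopology using bc by (intro exI[of _ "X closure_of c"]) auto
  with assms bc show "locally_closed_point X x"
    unfolding locally_closed_point_def by (intro conjI exI[of _ "X interior_of b"]) auto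
next
  assume "locally_closed_point X x"
  then obtain U where U: "openin X U" "x \<in> U" "closedin (subtopology X U) {x}"
    unfolding locally_closed_point_def by blast
  then obtain T where T: "closedin X T" "{x} = T \<inter> U"
    unfolding closedin_subtopology by blast
  have "{x} = X interior_of U \<inter> X closure_of T"
    using T U by (simp add: interior_of_openin closure_of_closedin Int_commute)
  with closedin_subset[OF T(1)] openin_subset[OF U(1)] show "pow_locally_closed X {x}"
    unfolding pow_locally_closed_def by blast
qed

lemma pow_left_adjoint_preimage:
  assumes "f ` topspace X \<subseteq> topspace Y" and "A \<subseteq> topspace X"
  shows "pow_left_adjoint Y (pow_preimage X f) A = f ` A"
proof -
  let ?S = "{B. B \<subseteq> topspace Y \<and> A \<subseteq> pow_preimage X f B}"
  have "f ` A \<in> ?S"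
    using assms unfolding pow_preimage_def by blast
  then have "\<Inter>?S \<subseteq> f ` A"
    by (rule Inter_lower)
  moreover have "f ` A \<subseteq> \<Inter>?S"
    unfolding pow_preimage_def by blast
  ultimately show ?thesis
    using assms unfolding pow_left_adjoint_def by blast
qed

lemma pow_mt_morphism_preimage:
  assumes "continuous_map X Y f"
  shows "pow_mt_morphism Y X (pow_preimage X f)"
proof -
  have fX: "f x \<in> topspace Y" if "x \<in> topspace X" for x
    using assms that continuous_map_image_subset_topspace by blast
  have "pow_preimage X f (Y interior_of B) \<subseteq> X interior_of pow_preimage X f B" for B
  proof (rule interior_of_maximal)
    show "openin X (pow_preimage X f (Y interior_of B))"
      unfolding pow_preimage_def
      using openin_continuous_map_preimage[OF assms openin_interior_of] by simp
    show "pow_preimage X f (Y interior_of B) \<subseteq> pow_preimage X f B"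
      unfolding pow_preimage_def using interior_of_subset[of Y B] by blast
  qed
  moreover have "pow_preimage X f (topspace Y \<inter> \<Inter>\<A>) = topspace X \<inter> \<Inter>(pow_preimage X f ` \<A>)"
    for \<A> :: "'b set set"
    unfolding pow_preimage_def using fX by auto
  moreover have "pow_preimage X f (topspace Y - B) = topspace X - pow_preimage X f B" for B
    unfolding pow_preimage_def using fX by blast
  moreover have "pow_preimage X f (\<Union>\<A>) = \<Union>(pow_preimage X f ` \<A>)" for \<A> :: "'b set set"
    unfolding pow_preimage_def by blast
  moreover have "pow_preimage X f B \<subseteq> topspace X" for B
    unfolding pow_preimage_def by blast
  ultimately show ?thesis
    unfolding pow_mt_morphism_def by simp
qed

lemma pow_D_morphism_preimage_iff:
  assumes "continuous_map X Y f"
  shows "pow_D_morphism Y X (pow_preimage X f) \<longleftrightarrow>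
    (\<forall>x\<in>topspace X. locally_closed_point X x \<longrightarrow> locally_closed_point Y (f x))"
    (is "_ \<longleftrightarrow> ?lc_map")
proof -
  have fX: "f ` topspace X \<subseteq> topspace Y"
    using assms continuous_map_image_subset_topspace by blast
  have adjoint: "pow_left_adjoint Y (pow_preimage X f) {x} = {f x}" if "x \<in> topspace X" for x
    using pow_left_adjoint_preimage[OF fX] that by simp
  have lc_iff: "pow_locally_closed X {x} \<longleftrightarrow> locally_closed_point X x"
    "pow_locally_closed Y {f x} \<longleftrightarrow> locally_closed_point Y (f x)"
    if "x \<in> topspace X" for x
    using pow_locally_closed_singleton_iff[of x X] pow_locally_closed_singleton_iff[of "f x" Y]
      fX that by auto
  show ?thesis
  proof
    assume D: "pow_D_morphism Y X (pow_preimage X f)"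
    show ?lc_map
    proof (intro ballI impI)
      fix x assume x: "x \<in> topspace X" and "locally_closed_point X x"
      then have "pow_atom X {x} \<and> pow_locally_closed X {x}"
        by (simp add: lc_iff(1) pow_atom_iff_singleton)
      with D have "pow_locally_closed Y (pow_left_adjoint Y (pow_preimage X f) {x})"
        unfolding pow_D_morphism_def by (elim conjE allE impE) auto
      with x show "locally_closed_point Y (f x)"
        by (simp add: adjoint lc_iff(2))
    qed
  next
    assume L: ?lc_map
    show "pow_D_morphism Y X (pow_preimage X f)"
      unfolding pow_D_morphism_def
    proof (intro conjI allI impI)
      show "pow_mt_morphism Y X (pow_preimage X f)"
        using pow_mt_morphism_preimage[OF assms] .
      fix a assume "pow_atom X a \<and> pow_locally_closed X a"
      then obtain x where x: "x \<in> topspace X" "a = {x}" "locally_closed_point X x"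
        using lc_iff(1) unfolding pow_atom_iff_singleton by auto
      show "pow_atom Y (pow_left_adjoint Y (pow_preimage X f) a)"
        using x fX by (auto simp: adjoint pow_atom_iff_singleton)
      show "pow_locally_closed Y (pow_left_adjoint Y (pow_preimage X f) a)"
        using x L by (simp add: adjoint lc_iff(2))
    qed
  qed
qed

theorem lemma5p12:
  fixes X :: "'a topology" and Y :: "'b topology" and f :: "'a \<Rightarrow> 'b"
  assumes "continuous_map X Y f"
  shows "locally_closed_map X Y f \<longleftrightarrow> pow_D_morphism Y X (pow_preimage X f)"
  unfolding pow_D_morphism_preimage_iff[OF assms] locally_closed_map_def
  by (auto dest: locally_closed_point_def[THEN iffD1])

end
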